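(* Let $n\geq 1$ and let $r,k\in\mathbf{Z}$ with $r\geq 1$. Then \begin{align*} \tilde{A}_{n}^{(r,k)}(x)&=x\tilde{A}_{n-1}^{(r,k)}(x-1)+r\sum_{a=0}^{n-1}\frac{(-1)^{a+1}a!}{a+2}\binom{n-1}{a}\tilde{A}_{n-1-a}^{(r+1,k)}(x)\\ &\quad +\frac{1}{n}\left(\tilde{A}_{n}^{(r+1,k-1)}(x)-\tilde{A}_{n}^{(r+1,k)}(x)\right). \end{align*}
   Context: For $k\in\mathbf{Z}$, $Lif_{k}(x)=\sum_{m=0}^{\infty}\frac{x^{m}}{m!(m+1)^{k}}$. For integers $r\geq 0$, $k\in\mathbf{Z}$, the polynomials $\tilde{A}_{n}^{(r,k)}(x)$ are defined by \[\left(\frac{t}{(1+t)\log(1+t)}\right)^{r}Lif_{k}\left(-\log(1+t)\right)(1+t)^{x}=\sum_{n=0}^{\infty}\tilde{A}_{n}^{(r,k)}(x)\frac{t^{n}}{n!}.\] *)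

theory Defs
  imports Complex_Main "HOL-Computational_Algebra.Formal_Power_Series"
begin

definition Lif_fps :: "int \<Rightarrow> real fps" where
  "Lif_fps k = Abs_fps (\<lambda>m. 1 / (fact m * (of_nat (m + 1)) powi k))"

definition Atilde_gf :: "nat \<Rightarrow> int \<Rightarrow> real \<Rightarrow> real fps" where
  "Atilde_gf r k x =
     (fps_X / ((1 + fps_X) * fps_ln 1)) ^ r * (Lif_fps k oo (- fps_ln 1)) * fps_binomial x"

definition Atilde :: "nat \<Rightarrow> nat \<Rightarrow> int \<Rightarrow> real \<Rightarrow> real" where
  "Atilde n r k x = fact n * fps_nth (Atilde_gf r k x) n"

end

theory Submission
  imports Defs
begin

text \<open>With P = t/((1+t) log(1+t)), L = log(1+t) and C_k = Lif_k(-L), the generating function is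
  P^r C_k (1+t)^x, and each factor satisfies a first-order differential equation once multiplied
  by t^2: t^2 P' = P^2 (L - t), t^2 C_k' = t P (C_(k-1) - C_k) (because t Lif_k' = Lif_(k-1) - Lif_k),
  and ((1+t)^x)' = x (1+t)^(x-1). By the product rule, t^2 times the derivative of the generating
  function is a combination of generating functions with r + 1; comparing coefficients of t^(n+1)
  gives the recurrence, the coefficients of L - t producing the sum over a.\<close>

definition log_quot :: "'a::field_char_0 fps" where
  "log_quot = fps_X / ((1 + fps_X) * fps_ln 1)"

lemma log_quot_mult: "log_quot * ((1 + fps_X) * fps_ln 1) = (fps_X :: 'a::field_char_0 fps)"
  unfolding log_quot_def
proof (rule fps_times_divide_eq)
  have coeff_one: "fps_nth ((1 + fps_X) * fps_ln 1 :: 'a fps) 1 = 1"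
    by (simp add: fps_mult_nth fps_ln_nth)
  then show "(1 + fps_X) * fps_ln 1 \<noteq> (0 :: 'a fps)"
    by (metis fps_zero_nth zero_neq_one)
  have "subdegree ((1 + fps_X) * fps_ln 1 :: 'a fps) \<le> 1"
    by (rule subdegree_leI) (simp add: coeff_one fps_ln_nth)
  then show "subdegree ((1 + fps_X) * fps_ln 1 :: 'a fps) \<le> subdegree (fps_X :: 'a fps)"
    by simp
qed

lemma fps_one_plus_X_mult_inverse: "(1 + fps_X) * inverse (1 + fps_X :: 'a::field fps) = 1"
  by (rule inverse_mult_eq_1') simp

lemma log_quot_mult_ln:
  "log_quot * fps_ln 1 = fps_X * inverse (1 + fps_X :: 'a::field_char_0 fps)"
proof -
  have "log_quot * fps_ln 1 * ((1 + fps_X) * inverse (1 + fps_X)) =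
        log_quot * ((1 + fps_X) * fps_ln 1) * inverse (1 + fps_X :: 'a fps)"
    by (simp add: ac_simps)
  then show ?thesis
    by (simp add: fps_one_plus_X_mult_inverse log_quot_mult)
qed

lemma fps_deriv_log_quot:
  "fps_X^2 * fps_deriv log_quot = log_quot^2 * (fps_ln 1 - fps_X :: 'a::field_char_0 fps)"
proof -
  let ?P = "log_quot :: 'a fps" and ?L = "fps_ln 1 :: 'a fps"
  have "fps_deriv (?P * ((1 + fps_X) * ?L)) = 1"
    by (simp add: log_quot_mult)
  moreover have "(1 + fps_X) * fps_deriv ?L = 1"
    by (simp add: fps_ln_deriv fps_one_plus_X_mult_inverse)
  moreover have "fps_deriv (?P * ((1 + fps_X) * ?L)) =
      fps_deriv ?P * ((1 + fps_X) * ?L) + ?P * ?L + ?P * ((1 + fps_X) * fps_deriv ?L)"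
    by (simp add: algebra_simps)
  ultimately have deriv: "fps_deriv ?P * ((1 + fps_X) * ?L) = 1 - ?P * ?L - ?P"
    by (simp add: algebra_simps)
  have "(fps_X^2 * fps_deriv ?P) * ((1 + fps_X) * ?L) = fps_X^2 * (1 - ?P * ?L - ?P)"
    by (simp add: deriv mult.assoc)
  also have "\<dots> = fps_X * (?P * ((1 + fps_X) * ?L)) - fps_X^2 * ?P * ?L - fps_X^2 * ?P"
    by (simp only: log_quot_mult) (simp add: power2_eq_square algebra_simps)
  also have "\<dots> = ?P * (?L - fps_X) * fps_X"
    by (simp add: power2_eq_square algebra_simps)
  also have "\<dots> = ?P * (?L - fps_X) * (?P * ((1 + fps_X) * ?L))"
    by (simp only: log_quot_mult)
  also have "\<dots> = (?P^2 * (?L - fps_X)) * ((1 + fps_X) * ?L)"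
    by (simp add: power2_eq_square algebra_simps)
  finally show ?thesis
    using log_quot_mult[where 'a='a] by (auto simp: mult_right_cancel)
qed

lemma fps_deriv_fps_binomial':
  "fps_deriv (fps_binomial a) = fps_const a * fps_binomial (a - 1 :: 'a::field_char_0)"
  by (rule fps_ext) (simp add: fps_deriv_nth gbinomial_absorption del: of_nat_Suc)

lemma fps_X_mult_deriv_Lif_fps: "fps_X * fps_deriv (Lif_fps k) = Lif_fps (k - 1) - Lif_fps k"
proof (rule fps_ext)
  fix m
  define q :: real where "q = of_nat m + 1"
  have "q \<noteq> 0"
    by (simp add: q_def add_pos_nonneg)
  then have "1 / (fact m * q powi (k - 1)) - 1 / (fact m * q powi k) = (q - 1) / (fact m * q powi k)"
    by (simp add: power_int_diff field_simps)
  also have "q - 1 = of_nat m"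
    by (simp add: q_def)
  finally have "fps_nth (Lif_fps (k - 1) - Lif_fps k) m = of_nat m / (fact m * q powi k)"
    by (simp add: Lif_fps_def q_def add.commute)
  moreover have "fps_nth (fps_X * fps_deriv (Lif_fps k)) m = of_nat m * fps_nth (Lif_fps k) m"
    by (cases m) (simp_all add: fps_deriv_nth del: of_nat_Suc)
  ultimately show "fps_nth (fps_X * fps_deriv (Lif_fps k)) m = fps_nth (Lif_fps (k - 1) - Lif_fps k) m"
    by (simp add: Lif_fps_def q_def add.commute)
qed

lemma fps_deriv_Lif_fps_compose:
  "fps_X^2 * fps_deriv (Lif_fps k oo - fps_ln 1) =
     fps_X * log_quot * ((Lif_fps (k - 1) oo - fps_ln 1) - (Lif_fps k oo - fps_ln 1))"
proof -
  have "(fps_X * fps_deriv (Lif_fps k)) oo - fps_ln 1 =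
        - fps_ln 1 * (fps_deriv (Lif_fps k) oo - fps_ln 1)"
    by (subst fps_compose_mult_distrib) simp_all
  then have compose: "(Lif_fps (k - 1) oo - fps_ln 1) - (Lif_fps k oo - fps_ln 1) =
        - fps_ln 1 * (fps_deriv (Lif_fps k) oo - fps_ln 1)"
    by (simp add: fps_X_mult_deriv_Lif_fps fps_compose_sub_distrib)
  have "fps_X^2 * fps_deriv (Lif_fps k oo - fps_ln 1) =
        - fps_X * (fps_X * inverse (1 + fps_X)) * (fps_deriv (Lif_fps k) oo - fps_ln 1)"
    by (simp add: fps_compose_deriv fps_ln_deriv power2_eq_square)
  also have "\<dots> = fps_X * log_quot * (- fps_ln 1 * (fps_deriv (Lif_fps k) oo - fps_ln 1))"
    by (simp only: log_quot_mult_ln[symmetric]) (simp add: ac_simps)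
  finally show ?thesis
    by (simp only: compose)
qed

lemma Atilde_gf_eq: "Atilde_gf r k x = log_quot ^ r * (Lif_fps k oo - fps_ln 1) * fps_binomial x"
  by (simp add: Atilde_gf_def log_quot_def)

lemma fps_deriv_Atilde_gf:
  assumes "r \<ge> 1"
  shows "fps_X^2 * fps_deriv (Atilde_gf r k x) =
      fps_const x * fps_X^2 * Atilde_gf r k (x - 1)
    + of_nat r * (fps_ln 1 - fps_X) * Atilde_gf (r + 1) k x
    + fps_X * (Atilde_gf (r + 1) (k - 1) x - Atilde_gf (r + 1) k x)"
proof -
  let ?P = "log_quot :: real fps" and ?C = "\<lambda>j. Lif_fps j oo - fps_ln 1"
  obtain s where r: "r = Suc s"
    using assms by (cases r) auto
  have "fps_X^2 * fps_deriv (?P ^ r * ?C k * fps_binomial x) =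
        of_nat r * ?P ^ s * (fps_X^2 * fps_deriv ?P) * ?C k * fps_binomial x
      + ?P ^ r * (fps_X^2 * fps_deriv (?C k)) * fps_binomial x
      + ?P ^ r * ?C k * (fps_X^2 * fps_deriv (fps_binomial x))"
    by (simp add: r fps_deriv_power fps_of_nat algebra_simps del: of_nat_Suc power_Suc)
  also have "\<dots> =
        of_nat r * ?P ^ s * (?P^2 * (fps_ln 1 - fps_X)) * ?C k * fps_binomial x
      + ?P ^ r * (fps_X * ?P * (?C (k - 1) - ?C k)) * fps_binomial x
      + ?P ^ r * ?C k * (fps_X^2 * (fps_const x * fps_binomial (x - 1)))"
    by (simp only: fps_deriv_log_quot fps_deriv_Lif_fps_compose fps_deriv_fps_binomial')
  finally show ?thesis
    by (simp add: Atilde_gf_eq r power2_eq_square algebra_simps del: of_nat_Suc)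
qed

lemma fps_nth_ln_minus_X_mult:
  "fps_nth ((fps_ln 1 - fps_X) * f) (Suc (Suc m)) =
     (\<Sum>a = 0..m. (-1) ^ (a + 1) / (of_nat a + 2) * fps_nth f (m - a :: nat))"
  for f :: "'a::field_char_0 fps"
proof -
  have "fps_nth ((fps_ln 1 - fps_X) * f) (Suc (Suc m)) =
        (\<Sum>i = 0..Suc (Suc m). fps_nth (fps_ln 1 - fps_X) i * fps_nth f (Suc (Suc m) - i))"
    by (simp add: fps_mult_nth)
  also have "\<dots> = (\<Sum>a = 0..m. fps_nth (fps_ln 1 - fps_X) (Suc (Suc a)) * fps_nth f (m - a))"
    by (simp only: sum.atLeast0_atMost_Suc_shift) (simp add: fps_ln_nth)
  finally show ?thesis
    by (simp add: fps_ln_nth add.commute)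
qed

lemma Atilde_gf_nth_recurrence:
  assumes "r \<ge> 1"
  shows "of_nat (Suc m) * fps_nth (Atilde_gf r k x) (Suc m) =
      x * fps_nth (Atilde_gf r k (x - 1)) m
    + of_nat r * (\<Sum>a = 0..m. (-1) ^ (a + 1) / (of_nat a + 2) * fps_nth (Atilde_gf (r + 1) k x) (m - a))
    + (fps_nth (Atilde_gf (r + 1) (k - 1) x) (Suc m) - fps_nth (Atilde_gf (r + 1) k x) (Suc m))"
proof -
  have "fps_nth (fps_X^2 * fps_deriv (Atilde_gf r k x)) (Suc (Suc m)) =
        of_nat (Suc m) * fps_nth (Atilde_gf r k x) (Suc m)"
    by (simp add: fps_X_power_mult_nth fps_deriv_nth)
  then show ?thesis
    unfolding fps_deriv_Atilde_gf[OF assms]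
    by (simp add: fps_X_power_mult_nth mult.assoc fps_nth_ln_minus_X_mult del: of_nat_Suc)
qed

theorem theorem5:
  fixes n r :: nat and k :: int and x :: real
  assumes "n \<ge> 1" and "r \<ge> 1"
  shows "Atilde n r k x =
      x * Atilde (n - 1) r k (x - 1)
    + of_nat r * (\<Sum>a = 0..n - 1. (-1) ^ (a + 1) * fact a / (of_nat a + 2)
                     * of_nat ((n - 1) choose a) * Atilde (n - 1 - a) (r + 1) k x)
    + (1 / of_nat n) * (Atilde n (r + 1) (k - 1) x - Atilde n (r + 1) k x)"
proof -
  obtain m where n: "n = Suc m"
    using assms(1) by (cases n) auto
  have binomial_sum:
    "(\<Sum>a = 0..m. (-1) ^ (a + 1) * fact a / (of_nat a + 2)
                     * of_nat (m choose a) * Atilde (m - a) (r + 1) k x)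
     = fact m * (\<Sum>a = 0..m. (-1) ^ (a + 1) / (of_nat a + 2) * fps_nth (Atilde_gf (r + 1) k x) (m - a))"
    unfolding sum_distrib_left
  proof (rule sum.cong)
    fix a assume "a \<in> {0..m}"
    then have "fact a * fact (m - a) * real (m choose a) = fact m"
      by (metis binomial_fact_lemma atLeastAtMost_iff of_nat_fact of_nat_mult)
    then show "(-1) ^ (a + 1) * fact a / (of_nat a + 2) * of_nat (m choose a) * Atilde (m - a) (r + 1) k x
        = fact m * ((-1) ^ (a + 1) / (of_nat a + 2) * fps_nth (Atilde_gf (r + 1) k x) (m - a))"
      by (simp add: Atilde_def field_simps)
  qed simp
  have "Atilde n r k x = fact m * (of_nat (Suc m) * fps_nth (Atilde_gf r k x) (Suc m))"
    by (simp add: Atilde_def n fact_Suc del: of_nat_Suc)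
  also have "\<dots> = x * Atilde m r k (x - 1)
    + of_nat r * (fact m * (\<Sum>a = 0..m. (-1) ^ (a + 1) / (of_nat a + 2) * fps_nth (Atilde_gf (r + 1) k x) (m - a)))
    + (1 / of_nat n) * (Atilde n (r + 1) (k - 1) x - Atilde n (r + 1) k x)"
    unfolding Atilde_gf_nth_recurrence[OF assms(2)]
    by (simp add: Atilde_def n fact_Suc field_simps del: of_nat_Suc)
  finally show ?thesis
    by (simp only: n diff_Suc_1 binomial_sum)
qed

end
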